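(* Let $G,H$ be finite connected simple graphs and $\Delta$ a triangulation of $G\times H$. Then $\beta(\operatorname{Prin}(G)\times\operatorname{Prin}(H))\subseteq\operatorname{Prin}(\Delta)$.
   Context: Triangulated product: $\Delta$ has vertex set $V(G)\times V(H)$; horizontal edges $\{(a,b),(x,b)\}$ ($ax\in E(G)$, $b\in V(H)$); vertical edges $\{(a,b),(a,y)\}$ ($a\in V(G)$, $by\in E(H)$); for each $ax\in E(G)$, $by\in E(H)$ the square $(a,b),(x,b),(x,y),(a,y)$ is split by one chosen diagonal edge into two triangles. For a triangle $\sigma$, $\mathrm{diag}(\sigma)$ is its diagonal edge. $\alpha(e,v)=1$ if $v\in e$, $e$ diagonal; $\alpha(e,v)=|\{\text{triangles }\sigma\supset e: v\notin\mathrm{diag}(\sigma)\}|$ if $v\in e$, $e$ not diagonal; $0$ if $v\notin e$. For $\phi:V(\Delta)\to\mathbb{Z}$, $\operatorname{Div}(\phi)=\sum_{r}\big(\sum_{\sigma\supset r}\phi(\sigma\setminus r)-\sum_{v\in r}\alpha(r,v)\phi(v)\big)[r]$ (sum over edges $r$ and triangles $\sigma$; $\sigma\setminus r$ the opposite vertex); $\operatorname{Prin}(\Delta)$ is the group of all such divisors. $\operatorname{Prin}(G)\subseteq\mathbb{Z}^{V(G)}$ is the column span of the Laplacian $L(G)$ (diagonal entries $-\deg(v_i)$, off-diagonal $1$ for adjacent vertices, $0$ otherwise); similarly for $H$. $\beta(C,D)$, for $C\in\mathbb{Z}^{V(G)}$, $D\in\mathbb{Z}^{V(H)}$, is the divisor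 on $\Delta$ with value $C(a)$ on each vertical edge $\{(a,b),(a,y)\}$, $D(b)$ on each horizontal edge $\{(a,b),(x,b)\}$, and $0$ on diagonal edges. *)

theory Defs
  imports Main
begin

definition simple_graph :: "'a set \<Rightarrow> ('a \<Rightarrow> 'a \<Rightarrow> bool) \<Rightarrow> bool" where
  "simple_graph V E \<longleftrightarrow> finite V \<and> (\<forall>u v. E u v \<longrightarrow> u \<in> V \<and> v \<in> V)
     \<and> (\<forall>u v. E u v \<longrightarrow> E v u) \<and> (\<forall>u. \<not> E u u)"

definition connected_graph :: "'a set \<Rightarrow> ('a \<Rightarrow> 'a \<Rightarrow> bool) \<Rightarrow> bool" where
  "connected_graph V E \<longleftrightarrow> V \<noteq> {} \<and> (\<forall>u\<in>V. \<forall>v\<in>V. E\<^sup>*\<^sup>* u v)"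

definition degree :: "'a set \<Rightarrow> ('a \<Rightarrow> 'a \<Rightarrow> bool) \<Rightarrow> 'a \<Rightarrow> nat" where
  "degree V E v = card {w\<in>V. E v w}"

definition laplacian :: "'a set \<Rightarrow> ('a \<Rightarrow> 'a \<Rightarrow> bool) \<Rightarrow> 'a \<Rightarrow> 'a \<Rightarrow> int" where
  "laplacian V E v w = (if v = w then - int (degree V E v) else if E v w then 1 else 0)"

definition prin_graph :: "'a set \<Rightarrow> ('a \<Rightarrow> 'a \<Rightarrow> bool) \<Rightarrow> ('a \<Rightarrow> int) set" where
  "prin_graph V E = {C. \<exists>c :: 'a \<Rightarrow> int. \<forall>v. C v =
      (if v \<in> V then (\<Sum>w\<in>V. laplacian V E v w * c w) else 0)}"

text \<open>A triangulation is given by the set D of chosen diagonal edges: for each pair of edges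
  ax of G and by of H exactly one of the two diagonals of the square is chosen.\<close>
definition triangulation ::
  "'a set \<Rightarrow> ('a \<Rightarrow> 'a \<Rightarrow> bool) \<Rightarrow> 'b set \<Rightarrow> ('b \<Rightarrow> 'b \<Rightarrow> bool) \<Rightarrow> ('a \<times> 'b) set set \<Rightarrow> bool" where
  "triangulation VG EG VH EH D \<longleftrightarrow>
     D \<subseteq> {{(a,b),(x,y)} | a x b y. EG a x \<and> EH b y} \<and>
     (\<forall>a x b y. EG a x \<longrightarrow> EH b y \<longrightarrow>
        ({(a,b),(x,y)} \<in> D \<longleftrightarrow> {(x,b),(a,y)} \<notin> D))"

definition tri_vertices :: "'a set \<Rightarrow> 'b set \<Rightarrow> ('a \<times> 'b) set" where
  "tri_vertices VG VH = VG \<times> VH"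

definition horiz_edges :: "('a \<Rightarrow> 'a \<Rightarrow> bool) \<Rightarrow> 'b set \<Rightarrow> ('a \<times> 'b) set set" where
  "horiz_edges EG VH = {{(a,b),(x,b)} | a x b. EG a x \<and> b \<in> VH}"

definition vert_edges :: "'a set \<Rightarrow> ('b \<Rightarrow> 'b \<Rightarrow> bool) \<Rightarrow> ('a \<times> 'b) set set" where
  "vert_edges VG EH = {{(a,b),(a,y)} | a b y. a \<in> VG \<and> EH b y}"

definition tri_edges ::
  "'a set \<Rightarrow> ('a \<Rightarrow> 'a \<Rightarrow> bool) \<Rightarrow> 'b set \<Rightarrow> ('b \<Rightarrow> 'b \<Rightarrow> bool) \<Rightarrow> ('a \<times> 'b) set set \<Rightarrow> ('a \<times> 'b) set set" where
  "tri_edges VG EG VH EH D = horiz_edges EG VH \<union> vert_edges VG EH \<union> D"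

text \<open>Triangles: each square (a,b),(x,b),(x,y),(a,y) is split by its chosen diagonal d into
  the two triangles d \<union> {r}, r one of the two remaining corners.\<close>
definition triangles ::
  "('a \<Rightarrow> 'a \<Rightarrow> bool) \<Rightarrow> ('b \<Rightarrow> 'b \<Rightarrow> bool) \<Rightarrow> ('a \<times> 'b) set set \<Rightarrow> ('a \<times> 'b) set set" where
  "triangles EG EH D = {insert r d | r d. d \<in> D \<and> (\<exists>a x b y. EG a x \<and> EH b y \<and>
       d \<subseteq> {(a,b),(x,b),(x,y),(a,y)} \<and> r \<in> {(a,b),(x,b),(x,y),(a,y)} - d)}"

definition diag :: "('a \<times> 'b) set set \<Rightarrow> ('a \<times> 'b) set \<Rightarrow> ('a \<times> 'b) set" where
  "diag D \<sigma> = (THE d. d \<in> D \<and> d \<subseteq> \<sigma>)"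

definition alpha ::
  "('a \<Rightarrow> 'a \<Rightarrow> bool) \<Rightarrow> ('b \<Rightarrow> 'b \<Rightarrow> bool) \<Rightarrow> ('a \<times> 'b) set set \<Rightarrow> ('a \<times> 'b) set \<Rightarrow> 'a \<times> 'b \<Rightarrow> int" where
  "alpha EG EH D e v =
     (if v \<in> e then
        (if e \<in> D then 1
         else int (card {\<sigma> \<in> triangles EG EH D. e \<subseteq> \<sigma> \<and> v \<notin> diag D \<sigma>}))
      else 0)"

text \<open>Divisors on \<Delta> are integer functions on edges (zero off the edge set).\<close>
definition Div ::
  "'a set \<Rightarrow> ('a \<Rightarrow> 'a \<Rightarrow> bool) \<Rightarrow> 'b set \<Rightarrow> ('b \<Rightarrow> 'b \<Rightarrow> bool) \<Rightarrow> ('a \<times> 'b) set set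
   \<Rightarrow> ('a \<times> 'b \<Rightarrow> int) \<Rightarrow> ('a \<times> 'b) set \<Rightarrow> int" where
  "Div VG EG VH EH D \<phi> r =
     (if r \<in> tri_edges VG EG VH EH D then
        (\<Sum>\<sigma> \<in> {\<sigma> \<in> triangles EG EH D. r \<subseteq> \<sigma>}. \<phi> (the_elem (\<sigma> - r)))
        - (\<Sum>v\<in>r. alpha EG EH D r v * \<phi> v)
      else 0)"

definition prin_tri ::
  "'a set \<Rightarrow> ('a \<Rightarrow> 'a \<Rightarrow> bool) \<Rightarrow> 'b set \<Rightarrow> ('b \<Rightarrow> 'b \<Rightarrow> bool) \<Rightarrow> ('a \<times> 'b) set set
   \<Rightarrow> (('a \<times> 'b) set \<Rightarrow> int) set" where
  "prin_tri VG EG VH EH D = {Div VG EG VH EH D \<phi> | \<phi>. \<phi> \<in> {\<phi>. \<forall>v. v \<notin> tri_vertices VG VH \<longrightarrow> \<phi> v = 0}}"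

text \<open>beta(C,D'): C(a) on vertical edges {(a,b),(a,y)}, D'(b) on horizontal edges
  {(a,b),(x,b)}, 0 on diagonal edges (and off the edge set).\<close>
definition beta ::
  "'a set \<Rightarrow> ('a \<Rightarrow> 'a \<Rightarrow> bool) \<Rightarrow> 'b set \<Rightarrow> ('b \<Rightarrow> 'b \<Rightarrow> bool)
   \<Rightarrow> ('a \<Rightarrow> int) \<Rightarrow> ('b \<Rightarrow> int) \<Rightarrow> ('a \<times> 'b) set \<Rightarrow> int" where
  "beta VG EG VH EH C D' r =
     (if r \<in> vert_edges VG EH then C (fst (SOME p. p \<in> r))
      else if r \<in> horiz_edges EG VH then D' (snd (SOME p. p \<in> r))
      else 0)"

end

theory Submission
  imports Defs
begin

text \<open>The vertex potential \<phi>(a,b) = c(a) + d(b) has divisor \<beta>(L_G c, L_H d).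
  A diagonal edge {(a,b),(x,y)} lies in exactly two triangles, with opposite vertices (x,b) and
  (a,y), and \<phi>(x,b) + \<phi>(a,y) = \<phi>(a,b) + \<phi>(x,y), so its coefficient vanishes.
  A vertical edge {(a,b),(a,y)} lies in exactly one triangle of each square over a neighbour x of
  a. That triangle contributes \<phi>(opposite vertex) - \<phi>(right-angle corner), and these two
  vertices differ only in the G-coordinate, so the contribution is c(x) - c(a); summing over x
  gives (L_G c)(a).
  Horizontal edges are symmetric.\<close>

lemma simple_graph_edgeD:
  assumes "simple_graph V E" "E v w"
  shows "v \<in> V" "w \<in> V" "E w v" "v \<noteq> w"
  using assms unfolding simple_graph_def by metis+

lemma finite_neighbours:
  assumes "simple_graph V E"
  shows "finite {w. E v w}"
proof (rule finite_subset)
  show "{w. E v w} \<subseteq> V" using simple_graph_edgeD[OF assms] by blast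
  show "finite V" using assms unfolding simple_graph_def by blast
qed

lemma laplacian_sum_neighbours:
  assumes "simple_graph V E" "v \<in> V"
  shows "(\<Sum>w\<in>V. laplacian V E v w * c w) = (\<Sum>w | E v w. c w - c v)"
proof -
  have fin: "finite V" using assms(1) unfolding simple_graph_def by blast
  have nbrs: "{w\<in>V. E v w} = {w. E v w}" using simple_graph_edgeD[OF assms(1)] by blast
  have "(\<Sum>w\<in>V. laplacian V E v w * c w) =
      (\<Sum>w\<in>V. (if w = v then - int (degree V E v) * c v else 0) + (if E v w then c w else 0))"
    using simple_graph_edgeD[OF assms(1)] by (intro sum.cong) (auto simp: laplacian_def)
  also have "\<dots> = - int (degree V E v) * c v + (\<Sum>w\<in>{w\<in>V. E v w}. c w)"
    using fin assms(2) by (simp add: sum.distrib sum.inter_filter)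
  also have "\<dots> = (\<Sum>w | E v w. c w - c v)"
    by (simp add: sum_subtractf degree_def nbrs)
  finally show ?thesis .
qed

lemma prin_graph_neighbour_sum:
  assumes "simple_graph V E" "C \<in> prin_graph V E"
  obtains c where "\<And>v. v \<in> V \<Longrightarrow> C v = (\<Sum>w | E v w. c w - c v)"
proof -
  obtain c where "\<And>v. C v = (if v \<in> V then (\<Sum>w\<in>V. laplacian V E v w * c w) else 0)"
    using assms(2) unfolding prin_graph_def by blast
  with that show ?thesis using laplacian_sum_neighbours[OF assms(1)] by simp
qed

text \<open>For a square with corners p, q, u, v in cyclic order, the triangle containing the side {p,q}.\<close>
definition side_triangle :: "('a \<times> 'b) set set \<Rightarrow> 'a \<times> 'b \<Rightarrow> 'a \<times> 'b \<Rightarrow> 'a \<times> 'b \<Rightarrow> 'a \<times> 'b \<Rightarrow> ('a \<times> 'b) set" where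
  "side_triangle D p q u v = (if {p,u} \<in> D then {p,q,u} else {p,q,v})"

lemma side_triangle_term:
  assumes "distinct [p,q,u,v]"
    and "diag D (side_triangle D p q u v) = (if {p,u} \<in> D then {p,u} else {q,v})"
  shows "\<phi> (the_elem (side_triangle D p q u v - {p,q}))
      - (\<Sum>w | w \<in> {p,q} \<and> w \<notin> diag D (side_triangle D p q u v). \<phi> w)
    = (if {p,u} \<in> D then \<phi> u - \<phi> q else \<phi> v - \<phi> p)"
proof (cases "{p,u} \<in> D")
  case True
  then have "side_triangle D p q u v - {p,q} = {u}" "{w. w \<in> {p,q} \<and> w \<notin> {p,u}} = {q}"
    using assms(1) by (auto simp: side_triangle_def)
  with True assms(2) show ?thesis by simp
next
  case False
  then have "side_triangle D p q u v - {p,q} = {v}" "{w. w \<in> {p,q} \<and> w \<notin> {q,v}} = {p}"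
    using assms(1) by (auto simp: side_triangle_def)
  with False assms(2) show ?thesis by simp
qed

lemma Div_side_edge:
  assumes "r \<in> tri_edges VG EG VH EH D" "r \<notin> D" "finite r"
    and "finite {\<sigma> \<in> triangles EG EH D. r \<subseteq> \<sigma>}"
  shows "Div VG EG VH EH D \<phi> r = (\<Sum>\<sigma> \<in> {\<sigma> \<in> triangles EG EH D. r \<subseteq> \<sigma>}.
    \<phi> (the_elem (\<sigma> - r)) - (\<Sum>v | v \<in> r \<and> v \<notin> diag D \<sigma>. \<phi> v))"
proof -
  define T where "T = {\<sigma> \<in> triangles EG EH D. r \<subseteq> \<sigma>}"
  have "(\<Sum>v\<in>r. alpha EG EH D r v * \<phi> v) = (\<Sum>v\<in>r. \<Sum>\<sigma> | \<sigma> \<in> T \<and> v \<notin> diag D \<sigma>. \<phi> v)"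
    using assms(2) by (intro sum.cong) (simp_all add: alpha_def T_def conj_assoc)
  also have "\<dots> = (\<Sum>\<sigma>\<in>T. \<Sum>v | v \<in> r \<and> v \<notin> diag D \<sigma>. \<phi> v)"
    using assms(3,4) unfolding T_def by (intro sum.swap_restrict) auto
  finally show ?thesis
    using assms(1) unfolding Div_def T_def by (simp add: sum_subtractf)
qed

definition product_potential :: "'a set \<Rightarrow> 'b set \<Rightarrow> ('a \<Rightarrow> int) \<Rightarrow> ('b \<Rightarrow> int) \<Rightarrow> 'a \<times> 'b \<Rightarrow> int" where
  "product_potential VG VH c d p = (if p \<in> VG \<times> VH then c (fst p) + d (snd p) else 0)"

locale triangulated_product =
  fixes VG :: "'a set" and EG :: "'a \<Rightarrow> 'a \<Rightarrow> bool"
    and VH :: "'b set" and EH :: "'b \<Rightarrow> 'b \<Rightarrow> bool"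
    and D :: "('a \<times> 'b) set set"
  assumes G: "simple_graph VG EG" and H: "simple_graph VH EH"
    and triangulation: "triangulation VG EG VH EH D"
begin

lemmas G_edgeD = simple_graph_edgeD[OF G] and H_edgeD = simple_graph_edgeD[OF H]

lemma diagonal_iff: "EG a x \<Longrightarrow> EH b y \<Longrightarrow> {(a,b),(x,y)} \<in> D \<longleftrightarrow> {(x,b),(a,y)} \<notin> D"
  using triangulation unfolding triangulation_def by blast

lemma diagonalE:
  assumes "d \<in> D"
  obtains a x b y where "d = {(a,b),(x,y)}" "EG a x" "EH b y"
  using assms triangulation unfolding triangulation_def by blast

lemma diagonal_in_square_triangle:
  assumes "EG a x" "EH b y" "p \<in> {(x,b),(a,y)}" "d \<in> D" "d \<subseteq> insert p {(a,b),(x,y)}"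
  shows "d = {(a,b),(x,y)}"
proof -
  obtain a' x' b' y' where d: "d = {(a',b'),(x',y')}" "EG a' x'" "EH b' y'"
    using diagonalE[OF assms(4)] by metis
  have "a \<noteq> x" "b \<noteq> y" "a' \<noteq> x'" "b' \<noteq> y'"
    using G_edgeD(4) H_edgeD(4) assms(1,2) d(2,3) by blast+
  moreover have "(a',b') \<in> {p,(a,b),(x,y)}" "(x',y') \<in> {p,(a,b),(x,y)}"
    using assms(5) unfolding d(1) by auto
  ultimately show ?thesis using assms(3) unfolding d(1) by auto
qed

lemma square_triangle:
  assumes "EG a x" "EH b y" "{(a,b),(x,y)} \<in> D" "p \<in> {(x,b),(a,y)}"
  shows "insert p {(a,b),(x,y)} \<in> triangles EG EH D"
    and "diag D (insert p {(a,b),(x,y)}) = {(a,b),(x,y)}"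
proof -
  have "a \<noteq> x" "b \<noteq> y" using G_edgeD(4)[OF assms(1)] H_edgeD(4)[OF assms(2)] .
  then have "{(a,b),(x,y)} \<subseteq> {(a,b),(x,b),(x,y),(a,y)}"
    "p \<in> {(a,b),(x,b),(x,y),(a,y)} - {(a,b),(x,y)}" using assms(4) by auto
  with assms(1-3) show "insert p {(a,b),(x,y)} \<in> triangles EG EH D"
    unfolding triangles_def by (intro CollectI exI[of _ p] exI[of _ "{(a,b),(x,y)}"] exI[of _ a] exI[of _ x]
      exI[of _ b] exI[of _ y] conjI refl)
  show "diag D (insert p {(a,b),(x,y)}) = {(a,b),(x,y)}"
    unfolding diag_def using assms diagonal_in_square_triangle by (intro the_equality) blast+
qed

lemma triangleE:
  assumes "\<sigma> \<in> triangles EG EH D"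
  obtains a x b y p where "EG a x" "EH b y" "{(a,b),(x,y)} \<in> D" "p \<in> {(x,b),(a,y)}"
    "\<sigma> = insert p {(a,b),(x,y)}"
proof -
  obtain p d a x b y where d: "d \<in> D" and \<sigma>: "\<sigma> = insert p d" and "EG a x" "EH b y"
    and d_sub: "d \<subseteq> {(a,b),(x,b),(x,y),(a,y)}" and p: "p \<in> {(a,b),(x,b),(x,y),(a,y)} - d"
    using assms unfolding triangles_def by blast
  obtain a' x' b' y' where d': "d = {(a',b'),(x',y')}" "EG a' x'" "EH b' y'"
    using diagonalE[OF d] by metis
  have "a \<noteq> x" "b \<noteq> y" "a' \<noteq> x'" "b' \<noteq> y'"
    using G_edgeD(4) H_edgeD(4) \<open>EG a x\<close> \<open>EH b y\<close> d'(2,3) by blast+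
  then have "fst p \<in> {a',x'}" "snd p \<in> {b',y'}" "p \<notin> {(a',b'),(x',y')}"
    using d_sub p unfolding d'(1) by auto
  then have "p \<in> {(x',b'),(a',y')}" by (cases p) auto
  with d d' \<sigma> show ?thesis by (intro that) auto
qed

lemma vertical_side_triangle:
  assumes "EG a x" "EH b y"
  shows "side_triangle D (a,b) (a,y) (x,y) (x,b) \<in> triangles EG EH D \<and>
    diag D (side_triangle D (a,b) (a,y) (x,y) (x,b)) =
      (if {(a,b),(x,y)} \<in> D then {(a,b),(x,y)} else {(a,y),(x,b)})"
proof (cases "{(a,b),(x,y)} \<in> D")
  case True
  then show ?thesis
    using square_triangle[OF assms True, of "(a,y)"] by (simp add: side_triangle_def insert_commute)
next
  case False
  then have other: "{(x,b),(a,y)} \<in> D" using diagonal_iff[OF assms] by blast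
  with False show ?thesis
    using square_triangle[OF G_edgeD(3)[OF assms(1)] assms(2) other, of "(a,b)"]
    by (simp add: side_triangle_def insert_commute)
qed

lemma horizontal_side_triangle:
  assumes "EG a x" "EH b y"
  shows "side_triangle D (a,b) (x,b) (x,y) (a,y) \<in> triangles EG EH D \<and>
    diag D (side_triangle D (a,b) (x,b) (x,y) (a,y)) =
      (if {(a,b),(x,y)} \<in> D then {(a,b),(x,y)} else {(x,b),(a,y)})"
proof (cases "{(a,b),(x,y)} \<in> D")
  case True
  then show ?thesis
    using square_triangle[OF assms True, of "(x,b)"] by (simp add: side_triangle_def insert_commute)
next
  case False
  then have other: "{(x,b),(a,y)} \<in> D" using diagonal_iff[OF assms] by blast
  with False show ?thesis
    using square_triangle[OF G_edgeD(3)[OF assms(1)] assms(2) other, of "(a,b)"]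
    by (simp add: side_triangle_def insert_commute)
qed

lemma triangles_at_vertical_edge:
  assumes "EH b y"
  shows "{\<sigma> \<in> triangles EG EH D. {(a,b),(a,y)} \<subseteq> \<sigma>}
    = (\<lambda>x. side_triangle D (a,b) (a,y) (x,y) (x,b)) ` {x. EG a x}"
proof (intro equalityI subsetI)
  fix \<sigma> assume "\<sigma> \<in> {\<sigma> \<in> triangles EG EH D. {(a,b),(a,y)} \<subseteq> \<sigma>}"
  then have \<sigma>: "\<sigma> \<in> triangles EG EH D" and side: "(a,b) \<in> \<sigma>" "(a,y) \<in> \<sigma>" by auto
  obtain a' x' b' y' p where e: "EG a' x'" "EH b' y'" and d: "{(a',b'),(x',y')} \<in> D"
    and p: "p \<in> {(x',b'),(a',y')}" and \<sigma>_eq: "\<sigma> = insert p {(a',b'),(x',y')}"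
    by (rule triangleE[OF \<sigma>])
  have ne: "a' \<noteq> x'" "b' \<noteq> y'" "b \<noteq> y" using G_edgeD(4) H_edgeD(4) e assms by blast+
  have d': "{(x',b'),(a',y')} \<notin> D" using diagonal_iff[OF e] d by blast
  have b_y_cases: "(b,y) = (b',y') \<or> (b,y) = (y',b')" using side ne p unfolding \<sigma>_eq by auto
  from p consider "p = (x',b')" "a = x'" | "p = (a',y')" "a = a'"
    using side ne unfolding \<sigma>_eq by auto
  then have "\<exists>x. EG a x \<and> \<sigma> = side_triangle D (a,b) (a,y) (x,y) (x,b)"
  proof cases
    case 1
    then have "\<sigma> = side_triangle D (a,b) (a,y) (a',y) (a',b)"
      using b_y_cases d d' unfolding \<sigma>_eq side_triangle_def by (auto simp: insert_commute)
    then show ?thesis using G_edgeD(3)[OF e(1)] 1 by blast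
  next
    case 2
    then have "\<sigma> = side_triangle D (a,b) (a,y) (x',y) (x',b)"
      using b_y_cases d d' unfolding \<sigma>_eq side_triangle_def by (auto simp: insert_commute)
    then show ?thesis using e(1) 2 by blast
  qed
  then show "\<sigma> \<in> (\<lambda>x. side_triangle D (a,b) (a,y) (x,y) (x,b)) ` {x. EG a x}" by blast
next
  fix \<sigma> assume "\<sigma> \<in> (\<lambda>x. side_triangle D (a,b) (a,y) (x,y) (x,b)) ` {x. EG a x}"
  then obtain x where "EG a x" and \<sigma>: "\<sigma> = side_triangle D (a,b) (a,y) (x,y) (x,b)" by blast
  then have "\<sigma> \<in> triangles EG EH D" using vertical_side_triangle[OF _ assms] by blast
  moreover have "{(a,b),(a,y)} \<subseteq> \<sigma>" unfolding \<sigma> side_triangle_def by simp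
  ultimately show "\<sigma> \<in> {\<sigma> \<in> triangles EG EH D. {(a,b),(a,y)} \<subseteq> \<sigma>}" by blast
qed

lemma triangles_at_horizontal_edge:
  assumes "EG a x"
  shows "{\<sigma> \<in> triangles EG EH D. {(a,b),(x,b)} \<subseteq> \<sigma>}
    = (\<lambda>y. side_triangle D (a,b) (x,b) (x,y) (a,y)) ` {y. EH b y}"
proof (intro equalityI subsetI)
  fix \<sigma> assume "\<sigma> \<in> {\<sigma> \<in> triangles EG EH D. {(a,b),(x,b)} \<subseteq> \<sigma>}"
  then have \<sigma>: "\<sigma> \<in> triangles EG EH D" and side: "(a,b) \<in> \<sigma>" "(x,b) \<in> \<sigma>" by auto
  obtain a' x' b' y' p where e: "EG a' x'" "EH b' y'" and d: "{(a',b'),(x',y')} \<in> D"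
    and p: "p \<in> {(x',b'),(a',y')}" and \<sigma>_eq: "\<sigma> = insert p {(a',b'),(x',y')}"
    by (rule triangleE[OF \<sigma>])
  have ne: "a' \<noteq> x'" "b' \<noteq> y'" "a \<noteq> x" using G_edgeD(4) H_edgeD(4) e assms by blast+
  have d': "{(x',b'),(a',y')} \<notin> D" using diagonal_iff[OF e] d by blast
  have ax_cases: "(a,x) = (a',x') \<or> (a,x) = (x',a')" using side ne p unfolding \<sigma>_eq by auto
  from p consider "p = (x',b')" "b = b'" | "p = (a',y')" "b = y'"
    using side ne unfolding \<sigma>_eq by auto
  then have "\<exists>y. EH b y \<and> \<sigma> = side_triangle D (a,b) (x,b) (x,y) (a,y)"
  proof cases
    case 1
    then have "\<sigma> = side_triangle D (a,b) (x,b) (x,y') (a,y')"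
      using ax_cases d d' unfolding \<sigma>_eq side_triangle_def by (auto simp: insert_commute)
    then show ?thesis using e(2) 1 by blast
  next
    case 2
    then have "\<sigma> = side_triangle D (a,b) (x,b) (x,b') (a,b')"
      using ax_cases d d' unfolding \<sigma>_eq side_triangle_def by (auto simp: insert_commute)
    then show ?thesis using H_edgeD(3)[OF e(2)] 2 by blast
  qed
  then show "\<sigma> \<in> (\<lambda>y. side_triangle D (a,b) (x,b) (x,y) (a,y)) ` {y. EH b y}" by blast
next
  fix \<sigma> assume "\<sigma> \<in> (\<lambda>y. side_triangle D (a,b) (x,b) (x,y) (a,y)) ` {y. EH b y}"
  then obtain y where "EH b y" and \<sigma>: "\<sigma> = side_triangle D (a,b) (x,b) (x,y) (a,y)" by blast
  then have "\<sigma> \<in> triangles EG EH D" using horizontal_side_triangle[OF assms] by blast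
  moreover have "{(a,b),(x,b)} \<subseteq> \<sigma>" unfolding \<sigma> side_triangle_def by simp
  ultimately show "\<sigma> \<in> {\<sigma> \<in> triangles EG EH D. {(a,b),(x,b)} \<subseteq> \<sigma>}" by blast
qed

lemma inj_on_vertical_side_triangle:
  "inj_on (\<lambda>x. side_triangle D (a,b) (a,y) (x,y) (x,b)) {x. EG a x}"
proof (rule inj_onI)
  fix x x' assume x: "x \<in> {x. EG a x}"
    and eq: "side_triangle D (a,b) (a,y) (x,y) (x,b) = side_triangle D (a,b) (a,y) (x',y) (x',b)"
  have "x \<in> fst ` side_triangle D (a,b) (a,y) (x,y) (x,b)" by (force simp: side_triangle_def)
  also have "\<dots> \<subseteq> {a,x'}" unfolding eq by (auto simp: side_triangle_def)
  finally show "x = x'" using G_edgeD(4) x by auto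
qed

lemma inj_on_horizontal_side_triangle:
  "inj_on (\<lambda>y. side_triangle D (a,b) (x,b) (x,y) (a,y)) {y. EH b y}"
proof (rule inj_onI)
  fix y y' assume y: "y \<in> {y. EH b y}"
    and eq: "side_triangle D (a,b) (x,b) (x,y) (a,y) = side_triangle D (a,b) (x,b) (x,y') (a,y')"
  have "y \<in> snd ` side_triangle D (a,b) (x,b) (x,y) (a,y)" by (force simp: side_triangle_def)
  also have "\<dots> \<subseteq> {b,y'}" unfolding eq by (auto simp: side_triangle_def)
  finally show "y = y'" using H_edgeD(4) y by auto
qed

lemma vertical_edge_not_diagonal: "{(a,b),(a,y)} \<notin> D"
proof
  assume "{(a,b),(a,y)} \<in> D"
  then obtain a' x' b' y' where "{(a,b),(a,y)} = {(a',b'),(x',y')}" "EG a' x'"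
    by (metis diagonalE)
  then show False using G_edgeD(4) by (auto simp: doubleton_eq_iff)
qed

lemma horizontal_edge_not_diagonal: "{(a,b),(x,b)} \<notin> D"
proof
  assume "{(a,b),(x,b)} \<in> D"
  then obtain a' x' b' y' where "{(a,b),(x,b)} = {(a',b'),(x',y')}" "EH b' y'"
    by (metis diagonalE)
  then show False using H_edgeD(4) by (auto simp: doubleton_eq_iff)
qed

lemma Div_vertical_edge:
  assumes "a \<in> VG" "EH b y"
  shows "Div VG EG VH EH D \<phi> {(a,b),(a,y)} =
    (\<Sum>x | EG a x. if {(a,b),(x,y)} \<in> D then \<phi> (x,y) - \<phi> (a,y) else \<phi> (x,b) - \<phi> (a,b))"
proof -
  let ?r = "{(a,b),(a,y)}" and ?\<sigma> = "\<lambda>x. side_triangle D (a,b) (a,y) (x,y) (x,b)"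
  have edge: "?r \<in> tri_edges VG EG VH EH D"
    unfolding tri_edges_def vert_edges_def using assms by blast
  have "Div VG EG VH EH D \<phi> ?r = (\<Sum>\<sigma> \<in> ?\<sigma> ` {x. EG a x}.
      \<phi> (the_elem (\<sigma> - ?r)) - (\<Sum>v | v \<in> ?r \<and> v \<notin> diag D \<sigma>. \<phi> v))"
    using finite_neighbours[OF G]
    by (intro Div_side_edge[OF edge vertical_edge_not_diagonal,
          unfolded triangles_at_vertical_edge[OF assms(2)]]) auto
  also have "\<dots> = (\<Sum>x | EG a x.
      \<phi> (the_elem (?\<sigma> x - ?r)) - (\<Sum>v | v \<in> ?r \<and> v \<notin> diag D (?\<sigma> x). \<phi> v))"
    by (rule sum.reindex[OF inj_on_vertical_side_triangle, unfolded o_def])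
  also have "\<dots> = (\<Sum>x | EG a x.
      if {(a,b),(x,y)} \<in> D then \<phi> (x,y) - \<phi> (a,y) else \<phi> (x,b) - \<phi> (a,b))"
    using G_edgeD(4) H_edgeD(4)[OF assms(2)] vertical_side_triangle[OF _ assms(2)]
    by (intro sum.cong refl side_triangle_term) (auto simp: insert_commute)
  finally show ?thesis .
qed

lemma Div_horizontal_edge:
  assumes "EG a x" "b \<in> VH"
  shows "Div VG EG VH EH D \<phi> {(a,b),(x,b)} =
    (\<Sum>y | EH b y. if {(a,b),(x,y)} \<in> D then \<phi> (x,y) - \<phi> (x,b) else \<phi> (a,y) - \<phi> (a,b))"
proof -
  let ?r = "{(a,b),(x,b)}" and ?\<sigma> = "\<lambda>y. side_triangle D (a,b) (x,b) (x,y) (a,y)"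
  have edge: "?r \<in> tri_edges VG EG VH EH D"
    unfolding tri_edges_def horiz_edges_def using assms by blast
  have "Div VG EG VH EH D \<phi> ?r = (\<Sum>\<sigma> \<in> ?\<sigma> ` {y. EH b y}.
      \<phi> (the_elem (\<sigma> - ?r)) - (\<Sum>v | v \<in> ?r \<and> v \<notin> diag D \<sigma>. \<phi> v))"
    using finite_neighbours[OF H]
    by (intro Div_side_edge[OF edge horizontal_edge_not_diagonal,
          unfolded triangles_at_horizontal_edge[OF assms(1)]]) auto
  also have "\<dots> = (\<Sum>y | EH b y.
      \<phi> (the_elem (?\<sigma> y - ?r)) - (\<Sum>v | v \<in> ?r \<and> v \<notin> diag D (?\<sigma> y). \<phi> v))"
    by (rule sum.reindex[OF inj_on_horizontal_side_triangle, unfolded o_def])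
  also have "\<dots> = (\<Sum>y | EH b y.
      if {(a,b),(x,y)} \<in> D then \<phi> (x,y) - \<phi> (x,b) else \<phi> (a,y) - \<phi> (a,b))"
    using G_edgeD(4)[OF assms(1)] H_edgeD(4) horizontal_side_triangle[OF assms(1)]
    by (intro sum.cong refl side_triangle_term) auto
  finally show ?thesis .
qed

lemma triangles_at_diagonal:
  assumes "EG a x" "EH b y" "{(a,b),(x,y)} \<in> D"
  shows "{\<sigma> \<in> triangles EG EH D. {(a,b),(x,y)} \<subseteq> \<sigma>}
    = {insert (x,b) {(a,b),(x,y)}, insert (a,y) {(a,b),(x,y)}}"
proof (intro equalityI subsetI)
  fix \<sigma> assume "\<sigma> \<in> {\<sigma> \<in> triangles EG EH D. {(a,b),(x,y)} \<subseteq> \<sigma>}"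
  then have \<sigma>_tri: "\<sigma> \<in> triangles EG EH D" and sub: "{(a,b),(x,y)} \<subseteq> \<sigma>" by auto
  obtain a' x' b' y' p where e: "EG a' x'" "EH b' y'" "{(a',b'),(x',y')} \<in> D"
    and p: "p \<in> {(x',b'),(a',y')}" and \<sigma>: "\<sigma> = insert p {(a',b'),(x',y')}"
    by (rule triangleE[OF \<sigma>_tri])
  have "{(a,b),(x,y)} = {(a',b'),(x',y')}"
    using diagonal_in_square_triangle[OF e(1,2) p assms(3) sub[unfolded \<sigma>]] .
  then show "\<sigma> \<in> {insert (x,b) {(a,b),(x,y)}, insert (a,y) {(a,b),(x,y)}}"
    using p unfolding \<sigma> by (auto simp: doubleton_eq_iff)
qed (use square_triangle(1)[OF assms] in auto)

lemma Div_diagonal_edge: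
  assumes "EG a x" "EH b y" "{(a,b),(x,y)} \<in> D"
  shows "Div VG EG VH EH D \<phi> {(a,b),(x,y)} = \<phi> (x,b) + \<phi> (a,y) - \<phi> (a,b) - \<phi> (x,y)"
proof -
  have "a \<noteq> x" "b \<noteq> y" using G_edgeD(4)[OF assms(1)] H_edgeD(4)[OF assms(2)] .
  then have "insert (x,b) {(a,b),(x,y)} - {(a,b),(x,y)} = {(x,b)}"
    "insert (a,y) {(a,b),(x,y)} - {(a,b),(x,y)} = {(a,y)}"
    "insert (x,b) {(a,b),(x,y)} \<noteq> insert (a,y) {(a,b),(x,y)}" "(a,b) \<noteq> (x,y)" by auto
  moreover have "{(a,b),(x,y)} \<in> tri_edges VG EG VH EH D"
    unfolding tri_edges_def using assms(3) by blast
  ultimately show ?thesis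
    using assms(3) unfolding Div_def triangles_at_diagonal[OF assms] by (simp add: alpha_def)
qed

lemma Div_product_potential_vertical_edge:
  assumes "a \<in> VG" "EH b y"
  shows "Div VG EG VH EH D (product_potential VG VH c d) {(a,b),(a,y)} = (\<Sum>x | EG a x. c x - c a)"
  unfolding Div_vertical_edge[OF assms] using assms G_edgeD(2) H_edgeD(1,2)
  by (intro sum.cong) (auto simp: product_potential_def)

lemma Div_product_potential_horizontal_edge:
  assumes "EG a x" "b \<in> VH"
  shows "Div VG EG VH EH D (product_potential VG VH c d) {(a,b),(x,b)} = (\<Sum>y | EH b y. d y - d b)"
  unfolding Div_horizontal_edge[OF assms] using assms G_edgeD(1,2) H_edgeD(2)
  by (intro sum.cong) (auto simp: product_potential_def)

lemma Div_product_potential_diagonal_edge: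
  assumes "EG a x" "EH b y" "{(a,b),(x,y)} \<in> D"
  shows "Div VG EG VH EH D (product_potential VG VH c d) {(a,b),(x,y)} = 0"
  using assms G_edgeD(1,2) H_edgeD(1,2) by (simp add: Div_diagonal_edge product_potential_def)

lemma beta_vertical_edge:
  assumes "a \<in> VG" "EH b y"
  shows "beta VG EG VH EH CG CH {(a,b),(a,y)} = CG a"
proof -
  have "(SOME p. p \<in> {(a,b),(a,y)}) \<in> {(a,b),(a,y)}" by (rule someI[of _ "(a,b)"]) simp
  moreover have "{(a,b),(a,y)} \<in> vert_edges VG EH" unfolding vert_edges_def using assms by blast
  ultimately show ?thesis unfolding beta_def by auto
qed

lemma beta_horizontal_edge:
  assumes "EG a x" "b \<in> VH"
  shows "beta VG EG VH EH CG CH {(a,b),(x,b)} = CH b"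
proof -
  have "(SOME p. p \<in> {(a,b),(x,b)}) \<in> {(a,b),(x,b)}" by (rule someI[of _ "(a,b)"]) simp
  moreover have "{(a,b),(x,b)} \<in> horiz_edges EG VH" unfolding horiz_edges_def using assms by blast
  moreover have "{(a,b),(x,b)} \<notin> vert_edges VG EH"
    using G_edgeD(4)[OF assms(1)] unfolding vert_edges_def by (auto simp: doubleton_eq_iff)
  ultimately show ?thesis unfolding beta_def by auto
qed

lemma beta_diagonal_edge:
  assumes "r \<in> D"
  shows "beta VG EG VH EH CG CH r = 0"
  using assms vertical_edge_not_diagonal horizontal_edge_not_diagonal
  unfolding beta_def vert_edges_def horiz_edges_def by auto

lemma beta_eq_Div_product_potential:
  assumes "\<And>a. a \<in> VG \<Longrightarrow> CG a = (\<Sum>x | EG a x. c x - c a)"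
    and "\<And>b. b \<in> VH \<Longrightarrow> CH b = (\<Sum>y | EH b y. d y - d b)"
  shows "beta VG EG VH EH CG CH = Div VG EG VH EH D (product_potential VG VH c d)"
proof
  fix r
  consider "r \<in> vert_edges VG EH" | "r \<in> horiz_edges EG VH" | "r \<in> D"
    | "r \<notin> tri_edges VG EG VH EH D"
    unfolding tri_edges_def by blast
  then show "beta VG EG VH EH CG CH r = Div VG EG VH EH D (product_potential VG VH c d) r"
  proof cases
    case 1
    then obtain a b y where "r = {(a,b),(a,y)}" "a \<in> VG" "EH b y"
      unfolding vert_edges_def by blast
    then show ?thesis
      using assms(1) by (simp add: beta_vertical_edge Div_product_potential_vertical_edge)
  next
    case 2
    then obtain a x b where "r = {(a,b),(x,b)}" "EG a x" "b \<in> VH"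
      unfolding horiz_edges_def by blast
    then show ?thesis
      using assms(2) by (simp add: beta_horizontal_edge Div_product_potential_horizontal_edge)
  next
    case 3
    then obtain a x b y where "r = {(a,b),(x,y)}" "EG a x" "EH b y"
      by (rule diagonalE)
    with 3 show ?thesis by (simp add: beta_diagonal_edge Div_product_potential_diagonal_edge)
  next
    case 4
    then show ?thesis unfolding beta_def Div_def tri_edges_def by simp
  qed
qed

end

theorem mainTheorem3:
  fixes VG :: "'a set" and EG :: "'a \<Rightarrow> 'a \<Rightarrow> bool"
    and VH :: "'b set" and EH :: "'b \<Rightarrow> 'b \<Rightarrow> bool"
    and D :: "('a \<times> 'b) set set"
  assumes "simple_graph VG EG" and "connected_graph VG EG"
    and "simple_graph VH EH" and "connected_graph VH EH"
    and "triangulation VG EG VH EH D"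
  shows "\<forall>C \<in> prin_graph VG EG. \<forall>D' \<in> prin_graph VH EH.
           beta VG EG VH EH C D' \<in> prin_tri VG EG VH EH D"
proof (intro ballI)
  interpret triangulated_product VG EG VH EH D
    using assms(1,3,5) by unfold_locales
  fix C D' assume "C \<in> prin_graph VG EG" "D' \<in> prin_graph VH EH"
  then obtain c d where "\<And>a. a \<in> VG \<Longrightarrow> C a = (\<Sum>x | EG a x. c x - c a)"
    and "\<And>b. b \<in> VH \<Longrightarrow> D' b = (\<Sum>y | EH b y. d y - d b)"
    using prin_graph_neighbour_sum assms(1,3) by metis
  then have "beta VG EG VH EH C D' = Div VG EG VH EH D (product_potential VG VH c d)"
    by (rule beta_eq_Div_product_potential)
  moreover have "\<forall>v. v \<notin> tri_vertices VG VH \<longrightarrow> product_potential VG VH c d v = 0"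
    by (simp add: product_potential_def tri_vertices_def)
  ultimately show "beta VG EG VH EH C D' \<in> prin_tri VG EG VH EH D"
    unfolding prin_tri_def by blast
qed

end
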